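(* Let $n\ge1$, let $G^\star=([n],E^\star)$ be a directed graph (directed cycles allowed), and let $S_1=\operatorname{argmin}_{\mathcal S}|E^{(1)}|$, $S_2=\operatorname{argmin}_{S_1}|E^{(2)}|$, $S_3=\operatorname{argmin}_{(\mathcal P,\pi)\in S_2}|E^{(3)}_{(\mathcal P,\pi)}|$. Then (i) the partially ordered partition associated with $G^\star$ belongs to $S_3$, and (ii) for every $(\mathcal P,\pi)\in S_3$, $E^{(3)}_{(\mathcal P,\pi)}$ equals the set of unshielded perfect non-conductors in $G^\star$.
   Context: $[n]=\{1,\dots,n\}$. The observed distribution is Markov and faithful to $G^\star$; for distinct $a,b$ and $Z\subseteq[n]\setminus\{a,b\}$, $a\perp\!\!\!\perp b\mid Z$ means $a$ and $b$ are $d$-separated given $Z$ in $G^\star$, and $a\not\perp\!\!\!\perp b\mid Z$ is its negation. In a directed graph, $a$ is an ancestor of $b$ (and $b$ a descendant of $a$) if $a=b$ or there is a directed path from $a$ to $b$. Distinct $a,b$ are $p$-adjacent in a directed graph $G$ if there is an edge between them, or they have a common child which is an ancestor of $a$ or of $b$. A triple $(a,b,c)$ such that $a,c$ are not $p$-adjacent while $a,b$ and $c,b$ are $p$-adjacent is an unshielded conductor if $b$ is an ancestor of $a$ or of $c$, and an unshielded non-conductor otherwise; an unshielded non-conductor $(a,b,c)$ is perfect if $b$ is a descendant of a common child of $a$ and $c$, and imperfect otherwise. $\mathcal S$ is the set of pairs $(\mathcal P,\pi)$ with $\mathcal P$ a partition of $[n]$ and $\pi$ a partial order on $\mathcal P$;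 $C_1\le_\pi C_2$ iff $(C_1,C_2)\in\pi$; $C_{i,\mathcal P}$ is the block containing $i$; $C\le_\pi\max\{C_1,\dots,C_t\}$ means $C\le_\pi C_i$ for some $i$. The strongly connected components of a directed graph $G$ are the classes of $i\sim j$ iff $i=j$ or there are directed paths $i\to j$ and $j\to i$; on them $C_1\le_G C_2$ iff $C_1=C_2$ or there is a directed path from a vertex of $C_1$ to a vertex of $C_2$. The partially ordered partition associated with $G$ is (its set of strongly connected components, $\le_G$). For $(\mathcal P,\pi)\in\mathcal S$: $E^{(1)}_{(\mathcal P,\pi)}=\{(a,b): a\ne b,\ a\not\perp\!\!\!\perp b\mid\bigcup\{C\in\mathcal P: C\le_\pi\max\{C_{a,\mathcal P},C_{b,\mathcal P}\}\}\setminus\{a,b\}\}$; $E^{(2)}_{(\mathcal P,\pi)}$ is the set of $(a,b,c)$ distinct with $(a,b),(c,b)\in E^{(1)}$, $(a,c)\notin E^{(1)}$, $C_{b,\mathcal P}\le_\pi\max\{C_{a,\mathcal P},C_{c,\mathcal P}\}$; $E^{(3)}_{(\mathcal P,\pi)}$ is the set of $(a,b,c)$ distinct with $(a,b),(c,b)\in E^{(1)}$, $(a,c)\notin E^{(1)}$, and $a\not\perp\!\!\!\perp c\mid\bigcup\{C\in\mathcal P: C\le_\pi\max\{C_{a,\mathcal P},C_{b,\mathcal P},C_{c,\mathcal P}\}\}\setminus\{a,c\}$ (all $E$-sets indexed by $(\mathcal P,\pi)$). *)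

theory Defs
  imports Main "HOL-Library.Disjoint_Sets"
begin

(* Directed graph on vertex set {1..n}: edge relation E :: (nat * nat) set, (x,y) \<in> E means x \<rightarrow> y. *)

definition anc :: "(nat \<times> nat) set \<Rightarrow> nat \<Rightarrow> nat \<Rightarrow> bool" where
  "anc E a b \<longleftrightarrow> (a, b) \<in> E\<^sup>*"

(* A path: distinct vertex list vs with an orientation list ds;
   ds!i = True means edge vs!i \<rightarrow> vs!(i+1), False means vs!(i+1) \<rightarrow> vs!i. *)
definition is_path :: "(nat \<times> nat) set \<Rightarrow> nat list \<Rightarrow> bool list \<Rightarrow> bool" where
  "is_path E vs ds \<longleftrightarrow> length vs \<ge> 2 \<and> distinct vs \<and> length ds = length vs - 1 \<and>
     (\<forall>i < length ds. (if ds ! i then (vs ! i, vs ! Suc i) \<in> E else (vs ! Suc i, vs ! i) \<in> E))"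

definition is_collider :: "bool list \<Rightarrow> nat \<Rightarrow> bool" where
  "is_collider ds i \<longleftrightarrow> ds ! (i - 1) \<and> \<not> ds ! i"

definition d_connected :: "(nat \<times> nat) set \<Rightarrow> nat \<Rightarrow> nat \<Rightarrow> nat set \<Rightarrow> bool" where
  "d_connected E a b Z \<longleftrightarrow> (\<exists>vs ds. is_path E vs ds \<and> hd vs = a \<and> last vs = b \<and>
     (\<forall>i. 0 < i \<and> i < length vs - 1 \<longrightarrow>
        (if is_collider ds i then (\<exists>z\<in>Z. anc E (vs ! i) z) else vs ! i \<notin> Z)))"

definition dsep :: "(nat \<times> nat) set \<Rightarrow> nat \<Rightarrow> nat \<Rightarrow> nat set \<Rightarrow> bool" where
  "dsep E a b Z \<longleftrightarrow> \<not> d_connected E a b Z"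

definition p_adj :: "(nat \<times> nat) set \<Rightarrow> nat \<Rightarrow> nat \<Rightarrow> bool" where
  "p_adj E a b \<longleftrightarrow> a \<noteq> b \<and> ((a, b) \<in> E \<or> (b, a) \<in> E \<or>
     (\<exists>c. (a, c) \<in> E \<and> (b, c) \<in> E \<and> (anc E c a \<or> anc E c b)))"

definition perfect_nonconductors :: "nat \<Rightarrow> (nat \<times> nat) set \<Rightarrow> (nat \<times> nat \<times> nat) set" where
  "perfect_nonconductors n E = {(a, b, c). a \<in> {1..n} \<and> b \<in> {1..n} \<and> c \<in> {1..n} \<and>
      a \<noteq> c \<and> \<not> p_adj E a c \<and> p_adj E a b \<and> p_adj E c b \<and>
      \<not> anc E b a \<and> \<not> anc E b c \<and>
      (\<exists>d. (a, d) \<in> E \<and> (c, d) \<in> E \<and> anc E d b)}"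

definition POP :: "nat \<Rightarrow> (nat set set \<times> (nat set \<times> nat set) set) set" where
  "POP n = {(P, \<pi>). partition_on {1..n} P \<and> \<pi> \<subseteq> P \<times> P \<and> partial_order_on P \<pi>}"

definition blk :: "nat set set \<Rightarrow> nat \<Rightarrow> nat set" where
  "blk P i = (THE C. C \<in> P \<and> i \<in> C)"

(* \<Union>{C \<in> P. C \<le>_\<pi> max{C_x : x \<in> X}} *)
definition below :: "nat set set \<Rightarrow> (nat set \<times> nat set) set \<Rightarrow> nat set \<Rightarrow> nat set" where
  "below P \<pi> X = \<Union>{C \<in> P. \<exists>x\<in>X. (C, blk P x) \<in> \<pi>}"

definition E1 :: "nat \<Rightarrow> (nat \<times> nat) set \<Rightarrow> nat set set \<times> (nat set \<times> nat set) set \<Rightarrow> (nat \<times> nat) set" where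
  "E1 n E s = (case s of (P, \<pi>) \<Rightarrow>
     {(a, b). a \<in> {1..n} \<and> b \<in> {1..n} \<and> a \<noteq> b \<and> \<not> dsep E a b (below P \<pi> {a, b} - {a, b})})"

definition E2 :: "nat \<Rightarrow> (nat \<times> nat) set \<Rightarrow> nat set set \<times> (nat set \<times> nat set) set \<Rightarrow> (nat \<times> nat \<times> nat) set" where
  "E2 n E s = (case s of (P, \<pi>) \<Rightarrow>
     {(a, b, c). a \<in> {1..n} \<and> b \<in> {1..n} \<and> c \<in> {1..n} \<and> a \<noteq> b \<and> b \<noteq> c \<and> a \<noteq> c \<and>
        (a, b) \<in> E1 n E s \<and> (c, b) \<in> E1 n E s \<and> (a, c) \<notin> E1 n E s \<and>
        (\<exists>x\<in>{a, c}. (blk P b, blk P x) \<in> \<pi>)})"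

definition E3 :: "nat \<Rightarrow> (nat \<times> nat) set \<Rightarrow> nat set set \<times> (nat set \<times> nat set) set \<Rightarrow> (nat \<times> nat \<times> nat) set" where
  "E3 n E s = (case s of (P, \<pi>) \<Rightarrow>
     {(a, b, c). a \<in> {1..n} \<and> b \<in> {1..n} \<and> c \<in> {1..n} \<and> a \<noteq> b \<and> b \<noteq> c \<and> a \<noteq> c \<and>
        (a, b) \<in> E1 n E s \<and> (c, b) \<in> E1 n E s \<and> (a, c) \<notin> E1 n E s \<and>
        \<not> dsep E a c (below P \<pi> {a, b, c} - {a, c})})"

definition argmin_on :: "'s set \<Rightarrow> ('s \<Rightarrow> 'x set) \<Rightarrow> 's set" where
  "argmin_on S f = {s \<in> S. \<forall>t\<in>S. card (f s) \<le> card (f t)}"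

definition S3 :: "nat \<Rightarrow> (nat \<times> nat) set \<Rightarrow> (nat set set \<times> (nat set \<times> nat set) set) set" where
  "S3 n E = argmin_on (argmin_on (argmin_on (POP n) (E1 n E)) (E2 n E)) (E3 n E)"

definition scc_partition :: "nat \<Rightarrow> (nat \<times> nat) set \<Rightarrow> nat set set" where
  "scc_partition n E = {{j \<in> {1..n}. (i = j) \<or> ((i, j) \<in> E\<^sup>+ \<and> (j, i) \<in> E\<^sup>+)} | i. i \<in> {1..n}}"

definition scc_order :: "nat \<Rightarrow> (nat \<times> nat) set \<Rightarrow> (nat set \<times> nat set) set" where
  "scc_order n E = {(C1, C2). C1 \<in> scc_partition n E \<and> C2 \<in> scc_partition n E \<and>
     (C1 = C2 \<or> (\<exists>x\<in>C1. \<exists>y\<in>C2. (x, y) \<in> E\<^sup>+))}"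

end

theory Submission
  imports Defs
begin

(*
  Every d-connecting walk between distinct vertices can be shortened to a d-connecting path,
  so d-connections can be built by gluing walks.  For an arbitrary partially ordered partition
  this yields lower bounds: p-adjacent pairs always lie in E1, unshielded conductors lie in E2
  once E1 consists of the p-adjacent pairs only (otherwise b lies outside the conditioning set
  of a and c, and the conductor d-connects them), and perfect non-conductors lie in E3 (through
  the collider a -> d <- c with d an ancestor of b).  For the order of strongly connected
  components the conditioning sets are ancestral, and a d-connecting path given an ancestral
  set has only colliders as interior vertices, so it has at most one interior vertex; this gives
  the reverse inclusions.  Hence the SCC order attains all three lower bounds, and every
  minimiser attains them as well.
*)

section \<open>d-connecting walks\<close>

definition d_walk :: "(nat \<times> nat) set \<Rightarrow> nat set \<Rightarrow> nat list \<Rightarrow> bool list \<Rightarrow> bool" where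
  "d_walk E Z vs ds \<longleftrightarrow> length vs \<ge> 2 \<and> length ds = length vs - 1 \<and>
     (\<forall>i < length ds. (if ds ! i then (vs ! i, vs ! Suc i) \<in> E else (vs ! Suc i, vs ! i) \<in> E)) \<and>
     (\<forall>i. 0 < i \<and> i < length vs - 1 \<longrightarrow>
        (if is_collider ds i then (\<exists>z\<in>Z. anc E (vs ! i) z) else vs ! i \<notin> Z))"

lemma d_connected_iff_d_walk:
  "d_connected E a b Z \<longleftrightarrow> (\<exists>vs ds. d_walk E Z vs ds \<and> distinct vs \<and> hd vs = a \<and> last vs = b)"
  unfolding d_connected_def d_walk_def is_path_def by blast

lemma d_walk_two_iff: "d_walk E Z [u, v] [d] \<longleftrightarrow> (if d then (u, v) \<in> E else (v, u) \<in> E)"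
  unfolding d_walk_def by auto

lemma d_walk_Cons_iff:
  assumes "length vs \<ge> 2"
  shows "d_walk E Z (v # vs) (d # ds) \<longleftrightarrow> d_walk E Z vs ds \<and>
    (if d then (v, hd vs) \<in> E else (hd vs, v) \<in> E) \<and>
    (if d \<and> \<not> hd ds then (\<exists>z\<in>Z. anc E (hd vs) z) else hd vs \<notin> Z)"
proof -
  obtain n where n: "length vs = Suc (Suc n)" using assms by (metis add_2_eq_Suc le_iff_add)
  have shift: "(\<forall>i. 0 < i \<and> i < Suc m \<longrightarrow> Q i) \<longleftrightarrow> (\<forall>i<m. Q (Suc i))"
    for m and Q :: "nat \<Rightarrow> bool"
    by (metis less_Suc_eq_0_disj not_less_zero zero_less_Suc Suc_less_eq)
  have collider_Cons: "is_collider (d # ds) (Suc i) = is_collider ds i" if "0 < i" for i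
    using that by (simp add: is_collider_def)
  have hv: "hd vs = vs ! 0" using n by (cases vs) auto
  show ?thesis
    unfolding d_walk_def n length_Cons diff_Suc_1 shift All_less_Suc2
    by (cases ds) (auto simp: n hv collider_Cons is_collider_def)
qed

lemma d_walk_Cons_cases:
  assumes "d_walk E Z (v # vs) ds"
  obtains w d where "vs = [w]" "ds = [d]"
  | d ds' where "length vs \<ge> 2" "ds = d # ds'"
  using assms by (cases ds; cases vs; cases "tl vs") (auto simp: d_walk_def)

lemma d_walk_append:
  assumes "d_walk E Z vs1 ds1" "d_walk E Z vs2 ds2" "last vs1 = hd vs2"
    and "if last ds1 \<and> \<not> hd ds2 then (\<exists>z\<in>Z. anc E (hd vs2) z) else hd vs2 \<notin> Z"
  shows "d_walk E Z (vs1 @ tl vs2) (ds1 @ ds2)"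
  using assms
proof (induction vs1 arbitrary: ds1)
  case Nil
  then show ?case by (simp add: d_walk_def)
next
  case (Cons v vs1)
  have vs2: "length vs2 \<ge> 2" "vs2 = hd vs2 # tl vs2" "ds2 \<noteq> []"
    using Cons.prems(2) unfolding d_walk_def by (cases vs2; auto)+
  from Cons.prems(1) show ?case
  proof (cases rule: d_walk_Cons_cases)
    case (1 w d)
    then show ?thesis
      using Cons.prems vs2 d_walk_Cons_iff[of vs2 E Z v d ds2] by (auto simp: d_walk_two_iff)
  next
    case (2 d ds1')
    then have "ds1' \<noteq> []" "vs1 \<noteq> []"
      using Cons.prems(1) d_walk_Cons_iff[of vs1 E Z v d ds1'] by (auto simp: d_walk_def)
    then show ?thesis
      using Cons.prems Cons.IH[of ds1'] 2 vs2 d_walk_Cons_iff[of vs1 E Z v d ds1']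
        d_walk_Cons_iff[of "vs1 @ tl vs2" E Z v d "ds1' @ ds2"] by auto
  qed
qed

lemma d_walk_rev:
  "d_walk E Z vs ds \<Longrightarrow> d_walk E Z (rev vs) (rev (map Not ds))"
proof (induction vs arbitrary: ds)
  case Nil
  then show ?case by (simp add: d_walk_def)
next
  case (Cons v vs)
  from Cons.prems show ?case
  proof (cases rule: d_walk_Cons_cases)
    case (1 w d)
    then show ?thesis using Cons.prems by (auto simp: d_walk_two_iff)
  next
    case (2 d ds')
    then have walk: "d_walk E Z vs ds'" and edge: "d_walk E Z [hd vs, v] [\<not> d]"
      and junction: "if d \<and> \<not> hd ds' then (\<exists>z\<in>Z. anc E (hd vs) z) else hd vs \<notin> Z"
      using Cons.prems d_walk_Cons_iff[of vs E Z v d ds'] by (auto simp: d_walk_two_iff)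
    have "ds' \<noteq> []" "vs \<noteq> []" using walk unfolding d_walk_def by auto
    then have "d_walk E Z (rev vs @ tl [hd vs, v]) (rev (map Not ds') @ [\<not> d])"
      using d_walk_append[OF Cons.IH[OF walk] edge] junction
      by (auto simp: last_rev last_map hd_map hd_rev)
    then show ?thesis using 2 by simp
  qed
qed

lemma d_walk_take:
  "d_walk E Z vs ds \<Longrightarrow> 0 < k \<Longrightarrow> k \<le> length ds \<Longrightarrow> d_walk E Z (take (Suc k) vs) (take k ds)"
proof (induction vs arbitrary: ds k)
  case Nil
  then show ?case by (simp add: d_walk_def)
next
  case (Cons v vs)
  from Cons.prems(1) show ?case
  proof (cases rule: d_walk_Cons_cases)
    case (1 w d)
    then show ?thesis using Cons.prems by (cases k) auto
  next
    case (2 d ds')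
    have walk: "d_walk E Z vs ds'" and edge: "d_walk E Z [v, hd vs] [d]"
      and junction: "if d \<and> \<not> hd ds' then (\<exists>z\<in>Z. anc E (hd vs) z) else hd vs \<notin> Z"
      using 2 Cons.prems d_walk_Cons_iff[of vs E Z v d ds'] by (auto simp: d_walk_two_iff)
    show ?thesis
    proof (cases "k = 1")
      case True
      then show ?thesis using edge 2 by (cases vs) auto
    next
      case False
      then obtain k' where k: "k = Suc k'" "0 < k'" "k' \<le> length ds'"
        using Cons.prems 2 by (cases k) auto
      have "d_walk E Z (take (Suc k') vs) (take k' ds')" by (rule Cons.IH[OF walk k(2,3)])
      moreover have "hd (take (Suc k') vs) = hd vs" "hd (take k' ds') = hd ds'" "length (take (Suc k') vs) \<ge> 2"
        using 2 k by (auto simp: hd_take d_walk_def)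
      ultimately show ?thesis
        using 2 k edge junction d_walk_Cons_iff[of "take (Suc k') vs" E Z v d "take k' ds'"]
        by (auto simp: d_walk_two_iff)
    qed
  qed
qed

lemma d_walk_drop:
  "d_walk E Z vs ds \<Longrightarrow> k < length ds \<Longrightarrow> d_walk E Z (drop k vs) (drop k ds)"
proof (induction vs arbitrary: ds k)
  case Nil
  then show ?case by (simp add: d_walk_def)
next
  case (Cons v vs)
  from Cons.prems(1) show ?case
  proof (cases rule: d_walk_Cons_cases)
    case (1 w d)
    then show ?thesis using Cons.prems by simp
  next
    case (2 d ds')
    then show ?thesis
      using Cons.prems Cons.IH[of ds' "k - 1"] d_walk_Cons_iff[of vs E Z v d ds'] by (cases k) auto
  qed
qed

lemma d_walk_hd_anc:
  "d_walk E Z vs ds \<Longrightarrow> hd ds \<Longrightarrow> (\<exists>z\<in>Z. anc E (hd vs) z) \<or> (last ds \<and> anc E (hd vs) (last vs))"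
proof (induction vs arbitrary: ds)
  case Nil
  then show ?case by (simp add: d_walk_def)
next
  case (Cons v vs)
  from Cons.prems(1) show ?case
  proof (cases rule: d_walk_Cons_cases)
    case (1 w d)
    then show ?thesis using Cons.prems by (auto simp: d_walk_two_iff anc_def)
  next
    case (2 d ds')
    then have walk: "d_walk E Z vs ds'" and edge: "(v, hd vs) \<in> E"
      and junction: "\<not> hd ds' \<Longrightarrow> \<exists>z\<in>Z. anc E (hd vs) z"
      using Cons.prems d_walk_Cons_iff[of vs E Z v d ds'] by auto
    have "ds' \<noteq> []" "vs \<noteq> []" using walk by (auto simp: d_walk_def)
    moreover have "anc E v w" if "anc E (hd vs) w" for w
      using edge that unfolding anc_def by (rule converse_rtrancl_into_rtrancl)
    ultimately show ?thesis
      using Cons.IH[OF walk] junction 2 by (cases "hd ds'") auto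
  qed
qed

lemma last_take_conv_nth: "0 < k \<Longrightarrow> k \<le> length xs \<Longrightarrow> last (take k xs) = xs ! (k - 1)"
  by (subst last_conv_nth) auto

(* In the collider case a walk leaving vs ! i forwards must pass a collider, an ancestor of Z,
   before it enters vs ! j backwards. *)
lemma d_walk_loop_junction:
  assumes walk: "d_walk E Z vs ds" and ij: "0 < i" "i < j" "j < length ds" and loop: "vs ! i = vs ! j"
  shows "if ds ! (i - 1) \<and> \<not> ds ! j then (\<exists>z\<in>Z. anc E (vs ! i) z) else vs ! i \<notin> Z"
proof -
  have interior: "if is_collider ds k then (\<exists>z\<in>Z. anc E (vs ! k) z) else vs ! k \<notin> Z"
    if "0 < k" "k < length ds" for k
    using walk that unfolding d_walk_def by auto
  have "\<exists>z\<in>Z. anc E (vs ! i) z" if "ds ! (i - 1)" "\<not> ds ! j"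
  proof (cases "ds ! i")
    case False
    then show ?thesis using interior[of i] ij that by (auto simp: is_collider_def)
  next
    case True
    let ?vs = "drop i (take (Suc (Suc j)) vs)" and ?ds = "drop i (take (Suc j) ds)"
    have "d_walk E Z ?vs ?ds" using ij by (intro d_walk_drop d_walk_take walk) auto
    moreover have "hd ?vs = vs ! i" "hd ?ds = ds ! i" "last ?ds = ds ! j"
      using ij walk by (auto simp: hd_drop_conv_nth last_conv_nth d_walk_def)
    ultimately show ?thesis using d_walk_hd_anc[of E Z ?vs ?ds] True that by auto
  qed
  moreover have "vs ! i \<notin> Z" if "\<not> (ds ! (i - 1) \<and> \<not> ds ! j)"
    using that interior[of i] interior[of j] ij loop by (auto simp: is_collider_def)
  ultimately show ?thesis by auto
qed

lemma d_walk_shortcut: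
  assumes walk: "d_walk E Z vs ds" and "\<not> distinct vs" and ends: "hd vs \<noteq> last vs"
  obtains vs' ds' where "d_walk E Z vs' ds'" "hd vs' = hd vs" "last vs' = last vs"
    "length vs' < length vs"
proof -
  obtain i j where ij: "i < j" "j < length vs" "vs ! i = vs ! j"
    using \<open>\<not> distinct vs\<close> by (metis distinct_conv_nth linorder_neqE_nat)
  have len: "length vs = Suc (length ds)" "vs \<noteq> []" using walk unfolding d_walk_def by auto
  have hd_vs: "hd vs = vs ! 0" and last_vs: "last vs = vs ! length ds"
    using len by (auto simp: hd_conv_nth last_conv_nth)
  consider (head) "i = 0" "j < length ds" | (tail) "0 < i" "j = length ds"
    | (inner) "0 < i" "j < length ds"
  proof -
    have "\<not> (i = 0 \<and> j = length ds)" using ij ends hd_vs last_vs by auto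
    with ij len that show thesis by (cases "i = 0"; cases "j < length ds") auto
  qed
  then show ?thesis
  proof cases
    case head
    show ?thesis
      by (rule that[OF d_walk_drop[OF walk head(2)]])
        (use head ij len hd_vs in \<open>auto simp: hd_drop_conv_nth\<close>)
  next
    case tail
    show ?thesis
      by (rule that[OF d_walk_take[OF walk tail(1)]])
        (use tail ij len last_vs in \<open>auto simp: last_conv_nth hd_take\<close>)
  next
    case inner
    have "last (take i ds) = ds ! (i - 1)" "hd (drop j ds) = ds ! j"
      "last (take (Suc i) vs) = vs ! i" "hd (drop j vs) = vs ! j"
      using inner ij len by (auto simp: last_take_conv_nth hd_drop_conv_nth)
    then have "d_walk E Z (take (Suc i) vs @ tl (drop j vs)) (take i ds @ drop j ds)"
      using d_walk_loop_junction[OF walk inner(1) ij(1) inner(2) ij(3)] ij inner len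
      by (intro d_walk_append d_walk_take d_walk_drop walk) auto
    moreover have "tl (drop j vs) = drop (Suc j) vs" "drop (Suc j) vs \<noteq> []"
      using inner len by (auto simp: drop_Suc tl_drop)
    ultimately show ?thesis
      by (intro that[of "take (Suc i) vs @ tl (drop j vs)" "take i ds @ drop j ds"])
        (use ij inner len in \<open>auto simp: hd_take\<close>)
  qed
qed

lemma d_connected_if_d_walk:
  "d_walk E Z vs ds \<Longrightarrow> hd vs \<noteq> last vs \<Longrightarrow> d_connected E (hd vs) (last vs) Z"
proof (induction "length vs" arbitrary: vs ds rule: less_induct)
  case less
  show ?case
  proof (cases "distinct vs")
    case True
    then show ?thesis using less.prems unfolding d_connected_iff_d_walk by blast
  next
    case False
    obtain vs' ds' where "d_walk E Z vs' ds'" "hd vs' = hd vs" "last vs' = last vs"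
      "length vs' < length vs"
      by (rule d_walk_shortcut[OF less.prems(1) False less.prems(2)])
    then show ?thesis using less.hyps less.prems by metis
  qed
qed

lemma d_walk_noncollider_anc:
  assumes walk: "d_walk E Z vs ds" and i: "0 < i" "i < length ds" and "\<not> is_collider ds i"
  shows "anc E (vs ! i) (hd vs) \<or> anc E (vs ! i) (last vs) \<or> (\<exists>z\<in>Z. anc E (vs ! i) z)"
proof (cases "ds ! i")
  case True
  have "d_walk E Z (drop i vs) (drop i ds)" using d_walk_drop[OF walk i(2)] .
  moreover have "hd (drop i vs) = vs ! i" "hd (drop i ds) = ds ! i" "last (drop i vs) = last vs"
    using walk i by (auto simp: hd_drop_conv_nth d_walk_def)
  ultimately show ?thesis using d_walk_hd_anc True by fastforce
next
  case False
  with \<open>\<not> is_collider ds i\<close> have "\<not> ds ! (i - 1)" by (simp add: is_collider_def)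
  let ?vs = "rev (take (Suc i) vs)" and ?ds = "rev (map Not (take i ds))"
  have "d_walk E Z ?vs ?ds" using walk i by (intro d_walk_rev d_walk_take) auto
  moreover have "hd ?ds = (\<not> ds ! (i - 1))"
    using i by (simp add: hd_rev last_map last_take_conv_nth flip: length_greater_0_conv)
  moreover have "hd ?vs = vs ! i" "last ?vs = hd vs"
    using walk i by (auto simp: hd_rev last_rev last_take_conv_nth hd_take d_walk_def)
  ultimately show ?thesis using d_walk_hd_anc \<open>\<not> ds ! (i - 1)\<close> by fastforce
qed

lemma d_connected_sym: "d_connected E a b Z \<Longrightarrow> d_connected E b a Z"
  unfolding d_connected_iff_d_walk by (metis d_walk_rev distinct_rev hd_rev last_rev)

lemma directed_d_walk:
  assumes "(x, y) \<in> E\<^sup>*" "x \<noteq> y" "\<not> (\<exists>z\<in>Z. anc E x z)"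
  shows "\<exists>vs ds. d_walk E Z vs ds \<and> hd vs = x \<and> last vs = y \<and> hd ds"
  using assms
proof (induction rule: converse_rtrancl_induct)
  case base
  then show ?case by simp
next
  case (step x x')
  have x'_notin: "\<not> (\<exists>z\<in>Z. anc E x' z)" and "x' \<notin> Z"
    using step.hyps(1) step.prems(2) unfolding anc_def by (auto intro: converse_rtrancl_into_rtrancl)
  show ?case
  proof (cases "x' = y")
    case True
    then show ?thesis
      using step.hyps(1) by (intro exI[of _ "[x, y]"] exI[of _ "[True]"]) (simp add: d_walk_two_iff)
  next
    case False
    then obtain vs ds where walk: "d_walk E Z vs ds" "hd vs = x'" "last vs = y" "hd ds"
      using step.IH x'_notin by blast
    then have "d_walk E Z (x # vs) (True # ds)" "vs \<noteq> []"
      using d_walk_Cons_iff[of vs E Z x True ds] step.hyps(1) \<open>x' \<notin> Z\<close>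
      by (auto simp: d_walk_def)
    then show ?thesis using walk by (intro exI[of _ "x # vs"] exI[of _ "True # ds"]) auto
  qed
qed

lemma d_connected_via_child:
  assumes "(a, c) \<in> E" "anc E c b" "a \<noteq> b" "a \<notin> Z"
    and "\<not> (\<exists>z\<in>Z. anc E c z)"
  shows "d_connected E a b Z"
proof (cases "c = b")
  case True
  then have "d_walk E Z [a, b] [True]" using assms by (simp add: d_walk_two_iff)
  then show ?thesis using d_connected_if_d_walk assms by fastforce
next
  case False
  then obtain vs ds where walk: "d_walk E Z vs ds" "hd vs = c" "last vs = b" "hd ds"
    using directed_d_walk assms unfolding anc_def by blast
  have "c \<notin> Z" using assms unfolding anc_def by auto
  then have "d_walk E Z (a # vs) (True # ds)" "vs \<noteq> []"
    using walk d_walk_Cons_iff[of vs E Z a True ds] assms by (auto simp: d_walk_def)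
  then show ?thesis using d_connected_if_d_walk walk assms by fastforce
qed

lemma d_connected_if_p_adj:
  assumes "p_adj E a b" "a \<notin> Z" "b \<notin> Z"
  shows "d_connected E a b Z"
proof -
  have "a \<noteq> b" using assms unfolding p_adj_def by auto
  have edge: "d_connected E a b Z" if "d_walk E Z [a, b] [d]" for d
    using d_connected_if_d_walk[OF that] \<open>a \<noteq> b\<close> by simp
  consider "(a, b) \<in> E" | "(b, a) \<in> E"
    | c where "(a, c) \<in> E" "(b, c) \<in> E" "anc E c a \<or> anc E c b"
    using assms unfolding p_adj_def by blast
  then show ?thesis
  proof cases
    case 1
    then show ?thesis using edge[of True] by (simp add: d_walk_two_iff)
  next
    case 2
    then show ?thesis using edge[of False] by (simp add: d_walk_two_iff)
  next
    case (3 c)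
    show ?thesis
    proof (cases "\<exists>z\<in>Z. anc E c z")
      case True
      then have "d_walk E Z [a, c, b] [True, False]"
        using 3 by (simp add: d_walk_Cons_iff d_walk_two_iff)
      then show ?thesis using d_connected_if_d_walk \<open>a \<noteq> b\<close> by fastforce
    next
      case False
      then show ?thesis
        using 3 d_connected_via_child d_connected_sym assms \<open>a \<noteq> b\<close> by metis
    qed
  qed
qed

lemma d_connected_via_conductor_left:
  assumes "p_adj E a b" "p_adj E c b" "anc E b a" "a \<noteq> c" "a \<notin> Z" "b \<notin> Z" "c \<notin> Z"
  shows "d_connected E a c Z"
proof -
  obtain vs1 ds1 where walk1: "d_walk E Z vs1 ds1" "hd vs1 = a" "last vs1 = b"
    and junction: "last ds1 \<Longrightarrow> \<exists>z\<in>Z. anc E b z"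
  proof (cases "\<exists>z\<in>Z. anc E b z")
    case True
    then show thesis
      using that d_connected_if_p_adj[of E a b Z] assms unfolding d_connected_iff_d_walk by blast
  next
    case False
    have "a \<noteq> b" using assms(1) by (simp add: p_adj_def)
    then obtain vs ds where "d_walk E Z vs ds" "hd vs = b" "last vs = a" "hd ds"
      using directed_d_walk[of b a E Z] assms(3) False unfolding anc_def by blast
    moreover have "vs \<noteq> []" "ds \<noteq> []" using \<open>d_walk E Z vs ds\<close> by (auto simp: d_walk_def)
    ultimately show thesis
      by (intro that[of "rev vs" "rev (map Not ds)"] d_walk_rev)
        (auto simp: hd_rev last_rev last_map hd_map)
  qed
  obtain vs2 ds2 where walk2: "d_walk E Z vs2 ds2" "hd vs2 = b" "last vs2 = c"
    using d_connected_if_p_adj[of E b c Z] assms unfolding d_connected_iff_d_walk p_adj_def by blast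
  have "d_walk E Z (vs1 @ tl vs2) (ds1 @ ds2)"
    using walk1 walk2 junction assms by (intro d_walk_append) auto
  moreover have "vs1 \<noteq> []" "last (vs1 @ tl vs2) = c"
    using walk1 walk2 by (cases vs2; auto simp: d_walk_def)+
  ultimately show ?thesis using d_connected_if_d_walk walk1 assms by fastforce
qed

lemma d_connected_via_conductor:
  assumes "p_adj E a b" "p_adj E c b" "anc E b a \<or> anc E b c" "a \<noteq> c" "a \<notin> Z" "b \<notin> Z" "c \<notin> Z"
  shows "d_connected E a c Z"
  using assms d_connected_via_conductor_left d_connected_sym by metis

definition ancestral :: "(nat \<times> nat) set \<Rightarrow> nat set \<Rightarrow> bool" where
  "ancestral E A \<longleftrightarrow> (\<forall>u v. v \<in> A \<longrightarrow> anc E u v \<longrightarrow> u \<in> A)"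

lemma d_connected_ancestral_cases:
  assumes "d_connected E a c Z" and anc_closed: "ancestral E (insert a (insert c Z))"
  shows "(a, c) \<in> E \<or> (c, a) \<in> E \<or> (\<exists>d. (a, d) \<in> E \<and> (c, d) \<in> E \<and> (\<exists>z\<in>Z. anc E d z))"
proof -
  obtain vs ds where walk: "d_walk E Z vs ds" "distinct vs" "hd vs = a" "last vs = c"
    using assms(1) unfolding d_connected_iff_d_walk by blast
  have len: "length vs = Suc (length ds)" "vs \<noteq> []" "ds \<noteq> []"
    using walk(1) unfolding d_walk_def by auto
  have ends: "vs ! 0 = a" "vs ! length ds = c"
    using walk len by (auto simp: hd_conv_nth last_conv_nth)
  have interior: "if is_collider ds i then (\<exists>z\<in>Z. anc E (vs ! i) z) else vs ! i \<notin> Z"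
    if "0 < i" "i < length ds" for i
    using walk(1) that unfolding d_walk_def by auto
  have collider: "is_collider ds i" if i: "0 < i" "i < length ds" for i
  proof (rule ccontr)
    assume noncollider: "\<not> is_collider ds i"
    then have "vs ! i \<in> insert a (insert c Z)"
      using d_walk_noncollider_anc[OF walk(1) i] anc_closed walk(3,4) unfolding ancestral_def
      by blast
    moreover have "vs ! i \<noteq> a" "vs ! i \<noteq> c"
      using walk(2) i ends len by (auto simp: nth_eq_iff_index_eq)
    ultimately show False using interior[OF i] noncollider by simp
  qed
  have edge: "if ds ! k then (vs ! k, vs ! Suc k) \<in> E else (vs ! Suc k, vs ! k) \<in> E"
    if "k < length ds" for k
    using walk(1) that unfolding d_walk_def by auto
  consider "length ds = 1" | "length ds = 2" | "length ds \<ge> 3"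
    using len by (cases "length ds") (auto, linarith)
  then show ?thesis
  proof cases
    case 1
    then show ?thesis using edge[of 0] ends by (auto split: if_splits)
  next
    case 2
    then have "ds ! 0" "\<not> ds ! 1" using collider[of 1] by (auto simp: is_collider_def)
    moreover have "\<exists>z\<in>Z. anc E (vs ! 1) z" using interior[of 1] collider[of 1] 2 by simp
    ultimately show ?thesis using edge[of 0] edge[of 1] ends 2 by (auto simp: numeral_2_eq_2)
  next
    case 3
    then show ?thesis using collider[of 1] collider[of 2] by (simp add: is_collider_def)
  qed
qed

definition ancestors :: "(nat \<times> nat) set \<Rightarrow> nat set \<Rightarrow> nat set" where
  "ancestors E X = {v. \<exists>x\<in>X. anc E v x}"

lemma ancestral_ancestors: "ancestral E (ancestors E X)"
  unfolding ancestral_def ancestors_def anc_def by (blast intro: rtrancl_trans)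

lemma ancestral_insert_ancestors_Diff:
  assumes "a \<in> X" "c \<in> X"
  shows "ancestral E (insert a (insert c (ancestors E X - {a, c})))"
proof -
  have "insert a (insert c (ancestors E X - {a, c})) = ancestors E X"
    using assms unfolding ancestors_def anc_def by auto
  then show ?thesis using ancestral_ancestors by simp
qed

section \<open>Partially ordered partitions and strongly connected components\<close>

lemma blk_eqI: "partition_on A P \<Longrightarrow> C \<in> P \<Longrightarrow> x \<in> C \<Longrightarrow> blk P x = C"
  unfolding blk_def by (rule the_equality) (auto dest: partition_onD2 disjointD)

lemma blk_in_partition:
  assumes "partition_on A P" "x \<in> A"
  shows "blk P x \<in> P" "x \<in> blk P x"
proof -
  obtain C where "C \<in> P" "x \<in> C" using assms partition_onD1 by blast
  then show "blk P x \<in> P" "x \<in> blk P x" using blk_eqI[OF assms(1)] by auto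
qed

lemma mem_below_iff:
  assumes "partition_on {1..n} P" "b \<in> {1..n}"
  shows "b \<in> below P \<pi> X \<longleftrightarrow> (\<exists>x\<in>X. (blk P b, blk P x) \<in> \<pi>)"
proof
  assume "b \<in> below P \<pi> X"
  then obtain C x where "C \<in> P" "b \<in> C" "x \<in> X" "(C, blk P x) \<in> \<pi>"
    unfolding below_def by blast
  then show "\<exists>x\<in>X. (blk P b, blk P x) \<in> \<pi>" using blk_eqI[OF assms(1)] by metis
next
  assume "\<exists>x\<in>X. (blk P b, blk P x) \<in> \<pi>"
  then show "b \<in> below P \<pi> X" using blk_in_partition[OF assms] unfolding below_def by blast
qed

lemma subset_below:
  assumes "(P, \<pi>) \<in> POP n" "X \<subseteq> {1..n}"
  shows "X \<subseteq> below P \<pi> X"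
proof
  fix x assume "x \<in> X"
  moreover have "partition_on {1..n} P" "refl_on P \<pi>"
    using assms(1) unfolding POP_def partial_order_on_def preorder_on_def by auto
  ultimately show "x \<in> below P \<pi> X"
    using mem_below_iff[of n P x \<pi> X] blk_in_partition[of "{1..n}" P x] assms(2)
    unfolding refl_on_def by blast
qed

definition scc_rel :: "nat \<Rightarrow> (nat \<times> nat) set \<Rightarrow> (nat \<times> nat) set" where
  "scc_rel n E = {(i, j). i \<in> {1..n} \<and> j \<in> {1..n} \<and> (i = j \<or> ((i, j) \<in> E\<^sup>+ \<and> (j, i) \<in> E\<^sup>+))}"

lemma equiv_scc_rel: "equiv {1..n} (scc_rel n E)"
  unfolding scc_rel_def by (rule equivI) (auto simp: refl_on_def sym_def trans_def intro: trancl_trans)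

lemma scc_partition_eq_quotient: "scc_partition n E = {1..n} // scc_rel n E"
  unfolding scc_partition_def scc_rel_def quotient_def by auto

lemma partition_on_scc_partition: "partition_on {1..n} (scc_partition n E)"
  unfolding scc_partition_eq_quotient by (rule partition_on_quotient[OF equiv_scc_rel])

lemma blk_scc_partition: "x \<in> {1..n} \<Longrightarrow> blk (scc_partition n E) x = scc_rel n E `` {x}"
  using partition_on_scc_partition equiv_class_self[OF equiv_scc_rel]
  by (intro blk_eqI) (auto simp: scc_partition_eq_quotient quotientI)

lemma scc_order_iff_anc:
  assumes "x \<in> {1..n}" "y \<in> {1..n}"
  shows "(scc_rel n E `` {x}, scc_rel n E `` {y}) \<in> scc_order n E \<longleftrightarrow> anc E x y"
proof
  assume "(scc_rel n E `` {x}, scc_rel n E `` {y}) \<in> scc_order n E"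
  then consider "scc_rel n E `` {x} = scc_rel n E `` {y}"
    | p q where "(x, p) \<in> scc_rel n E" "(y, q) \<in> scc_rel n E" "(p, q) \<in> E\<^sup>+"
    unfolding scc_order_def by auto
  then show "anc E x y"
  proof cases
    case 1
    then have "(x, y) \<in> scc_rel n E"
      using assms eq_equiv_class_iff[OF equiv_scc_rel] by blast
    then show ?thesis unfolding scc_rel_def anc_def by auto
  next
    case 2
    then have "(x, p) \<in> E\<^sup>*" "(p, q) \<in> E\<^sup>*" "(q, y) \<in> E\<^sup>*" unfolding scc_rel_def by auto
    then show ?thesis unfolding anc_def by (meson rtrancl_trans)
  qed
next
  assume "anc E x y"
  then have "x = y \<or> (x, y) \<in> E\<^sup>+" unfolding anc_def by (auto simp: rtrancl_eq_or_trancl)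
  moreover have "x \<in> scc_rel n E `` {x}" "y \<in> scc_rel n E `` {y}"
    using assms equiv_class_self[OF equiv_scc_rel] by auto
  ultimately show "(scc_rel n E `` {x}, scc_rel n E `` {y}) \<in> scc_order n E"
    using assms unfolding scc_order_def scc_partition_eq_quotient by (auto intro: quotientI)
qed

lemma scc_in_POP: "(scc_partition n E, scc_order n E) \<in> POP n"
proof -
  let ?R = "scc_rel n E"
  have classes: "\<exists>x\<in>{1..n}. C = ?R `` {x}" if "C \<in> scc_partition n E" for C
    using that unfolding scc_partition_eq_quotient by (auto elim: quotientE)
  have order_sub: "scc_order n E \<subseteq> scc_partition n E \<times> scc_partition n E"
    unfolding scc_order_def by auto
  have "trans (scc_order n E)"
  proof (rule transI)
    fix A B C assume "(A, B) \<in> scc_order n E" "(B, C) \<in> scc_order n E"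
    moreover obtain x y z where "x \<in> {1..n}" "y \<in> {1..n}" "z \<in> {1..n}"
      "A = ?R `` {x}" "B = ?R `` {y}" "C = ?R `` {z}"
      using calculation order_sub classes by (metis mem_Sigma_iff subsetD)
    ultimately show "(A, C) \<in> scc_order n E"
      using scc_order_iff_anc unfolding anc_def by (metis rtrancl_trans)
  qed
  moreover have "antisym (scc_order n E)"
  proof (rule antisymI)
    fix A B assume "(A, B) \<in> scc_order n E" "(B, A) \<in> scc_order n E"
    moreover obtain x y where "x \<in> {1..n}" "y \<in> {1..n}" "A = ?R `` {x}" "B = ?R `` {y}"
      using calculation order_sub classes by (metis mem_Sigma_iff subsetD)
    ultimately have "(x, y) \<in> ?R" "A = ?R `` {x}" "B = ?R `` {y}"
      using scc_order_iff_anc unfolding anc_def scc_rel_def by (auto simp: rtrancl_eq_or_trancl)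
    then show "A = B" using equiv_class_eq[OF equiv_scc_rel] by simp
  qed
  moreover have "refl_on (scc_partition n E) (scc_order n E)"
    unfolding refl_on_def scc_order_def by auto
  ultimately show ?thesis
    using partition_on_scc_partition order_sub
    unfolding POP_def partial_order_on_def preorder_on_def by auto
qed

lemma below_scc_eq_ancestors:
  assumes "E \<subseteq> {1..n} \<times> {1..n}" "X \<subseteq> {1..n}"
  shows "below (scc_partition n E) (scc_order n E) X = ancestors E X"
proof -
  let ?P = "scc_partition n E"
  have ancestors_in: "v \<in> {1..n}" if "anc E v x" "x \<in> X" for v x
    using that(1) unfolding anc_def
    by (cases rule: converse_rtranclE) (use that(2) assms in auto)
  have below_in: "v \<in> {1..n}" if "v \<in> below ?P (scc_order n E) X" for v
    using that partition_onD1[OF partition_on_scc_partition, of n E] unfolding below_def by blast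
  have "v \<in> below ?P (scc_order n E) X \<longleftrightarrow> (\<exists>x\<in>X. anc E v x)" if "v \<in> {1..n}" for v
    using mem_below_iff[OF partition_on_scc_partition that] blk_scc_partition
      scc_order_iff_anc that assms(2) by (metis subsetD)
  then show ?thesis using ancestors_in below_in unfolding ancestors_def by blast
qed

section \<open>Bounds on the sets E1, E2 and E3\<close>

definition p_adj_pairs :: "nat \<Rightarrow> (nat \<times> nat) set \<Rightarrow> (nat \<times> nat) set" where
  "p_adj_pairs n E = {(a, b). a \<in> {1..n} \<and> b \<in> {1..n} \<and> p_adj E a b}"

definition unshielded_conductors :: "nat \<Rightarrow> (nat \<times> nat) set \<Rightarrow> (nat \<times> nat \<times> nat) set" where
  "unshielded_conductors n E = {(a, b, c). a \<in> {1..n} \<and> b \<in> {1..n} \<and> c \<in> {1..n} \<and>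
      a \<noteq> b \<and> b \<noteq> c \<and> a \<noteq> c \<and> p_adj E a b \<and> p_adj E c b \<and> \<not> p_adj E a c \<and>
      (anc E b a \<or> anc E b c)}"

lemma p_adj_pairs_subset_E1: "p_adj_pairs n E \<subseteq> E1 n E s"
proof (cases s)
  case (Pair P \<pi>)
  have "a \<noteq> b" if "p_adj E a b" for a b using that unfolding p_adj_def by simp
  then show ?thesis
    using d_connected_if_p_adj[of E] unfolding Pair p_adj_pairs_def E1_def dsep_def by auto
qed

lemma E1_scc_subset_p_adj_pairs:
  assumes "E \<subseteq> {1..n} \<times> {1..n}"
  shows "E1 n E (scc_partition n E, scc_order n E) \<subseteq> p_adj_pairs n E"
proof safe
  fix a b assume "(a, b) \<in> E1 n E (scc_partition n E, scc_order n E)"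
  then have ab: "a \<in> {1..n}" "b \<in> {1..n}" "a \<noteq> b"
    and "d_connected E a b (ancestors E {a, b} - {a, b})"
    using below_scc_eq_ancestors[OF assms] unfolding E1_def dsep_def by auto
  moreover have "ancestral E (insert a (insert b (ancestors E {a, b} - {a, b})))"
    by (rule ancestral_insert_ancestors_Diff) auto
  ultimately consider "(a, b) \<in> E" | "(b, a) \<in> E"
    | d z where "(a, d) \<in> E" "(b, d) \<in> E" "anc E d z" "z \<in> ancestors E {a, b}"
    using d_connected_ancestral_cases by blast
  then have "p_adj E a b"
    using ab unfolding p_adj_def ancestors_def anc_def by cases (auto intro: rtrancl_trans)
  then show "(a, b) \<in> p_adj_pairs n E" using ab unfolding p_adj_pairs_def by simp
qed

lemma unshielded_conductors_subset_E2:
  assumes "(P, \<pi>) \<in> POP n" "E1 n E (P, \<pi>) = p_adj_pairs n E"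
  shows "unshielded_conductors n E \<subseteq> E2 n E (P, \<pi>)"
proof safe
  fix a b c assume abc: "(a, b, c) \<in> unshielded_conductors n E"
  have P: "partition_on {1..n} P" using assms(1) unfolding POP_def by auto
  have "\<exists>x\<in>{a, c}. (blk P b, blk P x) \<in> \<pi>"
  proof (rule ccontr)
    assume "\<not> (\<exists>x\<in>{a, c}. (blk P b, blk P x) \<in> \<pi>)"
    then have "b \<notin> below P \<pi> {a, c}" using mem_below_iff[OF P] abc
      unfolding unshielded_conductors_def by auto
    then have "d_connected E a c (below P \<pi> {a, c} - {a, c})"
      using abc d_connected_via_conductor unfolding unshielded_conductors_def by auto
    then show False using abc assms(2) unfolding unshielded_conductors_def p_adj_pairs_def E1_def dsep_def
      by auto
  qed
  then show "(a, b, c) \<in> E2 n E (P, \<pi>)"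
    using abc assms(2) unfolding unshielded_conductors_def p_adj_pairs_def E2_def by auto
qed

lemma E2_scc_subset_unshielded_conductors:
  assumes "E1 n E (scc_partition n E, scc_order n E) = p_adj_pairs n E"
  shows "E2 n E (scc_partition n E, scc_order n E) \<subseteq> unshielded_conductors n E"
proof safe
  fix a b c assume abc: "(a, b, c) \<in> E2 n E (scc_partition n E, scc_order n E)"
  then have "anc E b a \<or> anc E b c"
    using blk_scc_partition scc_order_iff_anc unfolding E2_def by auto
  then show "(a, b, c) \<in> unshielded_conductors n E"
    using abc assms unfolding E2_def p_adj_pairs_def unshielded_conductors_def by auto
qed

lemma perfect_nonconductors_subset_E3:
  assumes "(P, \<pi>) \<in> POP n" "E1 n E (P, \<pi>) = p_adj_pairs n E"
  shows "perfect_nonconductors n E \<subseteq> E3 n E (P, \<pi>)"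
proof safe
  fix a b c assume abc: "(a, b, c) \<in> perfect_nonconductors n E"
  then obtain d where d: "(a, d) \<in> E" "(c, d) \<in> E" "anc E d b"
    unfolding perfect_nonconductors_def by auto
  let ?Z = "below P \<pi> {a, b, c} - {a, c}"
  have "a \<noteq> b" "b \<noteq> c" using abc unfolding perfect_nonconductors_def p_adj_def by auto
  moreover have "{a, b, c} \<subseteq> {1..n}" using abc unfolding perfect_nonconductors_def by auto
  ultimately have "b \<in> ?Z" using subset_below[OF assms(1)] by blast
  then have "d_walk E ?Z [a, d, c] [True, False]"
    using d by (auto simp: d_walk_Cons_iff d_walk_two_iff)
  then have "d_connected E a c ?Z"
    using d_connected_if_d_walk abc unfolding perfect_nonconductors_def by fastforce
  then show "(a, b, c) \<in> E3 n E (P, \<pi>)"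
    using abc \<open>a \<noteq> b\<close> \<open>b \<noteq> c\<close> assms(2)
    unfolding perfect_nonconductors_def p_adj_pairs_def E3_def dsep_def by auto
qed

lemma E3_scc_subset_perfect_nonconductors:
  assumes "E \<subseteq> {1..n} \<times> {1..n}" "E1 n E (scc_partition n E, scc_order n E) = p_adj_pairs n E"
  shows "E3 n E (scc_partition n E, scc_order n E) \<subseteq> perfect_nonconductors n E"
proof safe
  fix a b c assume abc: "(a, b, c) \<in> E3 n E (scc_partition n E, scc_order n E)"
  then have range: "{a, b, c} \<subseteq> {1..n}" "a \<noteq> c"
    and padj: "p_adj E a b" "p_adj E c b" "\<not> p_adj E a c"
    and conn: "d_connected E a c (ancestors E {a, b, c} - {a, c})"
    using assms(2) below_scc_eq_ancestors[OF assms(1)] unfolding E3_def p_adj_pairs_def dsep_def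
    by auto
  have "ancestral E (insert a (insert c (ancestors E {a, b, c} - {a, c})))"
    by (rule ancestral_insert_ancestors_Diff) auto
  with conn padj(3) range(2) obtain d z where d: "(a, d) \<in> E" "(c, d) \<in> E" "anc E d z"
    "z \<in> ancestors E {a, b, c}"
    unfolding p_adj_def by (metis DiffD1 d_connected_ancestral_cases)
  then have "\<not> anc E d a" "\<not> anc E d c" using padj(3) range(2) unfolding p_adj_def by auto
  moreover have "anc E d a \<or> anc E d b \<or> anc E d c"
    using d unfolding ancestors_def anc_def by (auto intro: rtrancl_trans)
  ultimately have "anc E d b" "\<not> anc E b a" "\<not> anc E b c"
    unfolding anc_def by (auto intro: rtrancl_trans)
  then show "(a, b, c) \<in> perfect_nonconductors n E"
    using range padj d unfolding perfect_nonconductors_def by auto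
qed

lemma argmin_on_attained_lower_bound:
  assumes fin: "\<And>s. s \<in> S \<Longrightarrow> finite (f s)" and lower: "\<And>s. s \<in> S \<Longrightarrow> L \<subseteq> f s"
    and "s0 \<in> S" "f s0 \<subseteq> L"
  shows "s0 \<in> argmin_on S f" "\<And>s. s \<in> argmin_on S f \<Longrightarrow> f s = L"
proof -
  have "f s0 = L" using assms by blast
  then have "finite L" using fin \<open>s0 \<in> S\<close> by blast
  have "card L \<le> card (f s)" if "s \<in> S" for s
    using card_mono[OF fin lower] that by blast
  then show "s0 \<in> argmin_on S f" using \<open>s0 \<in> S\<close> \<open>f s0 = L\<close> unfolding argmin_on_def by auto
  fix s assume "s \<in> argmin_on S f"
  then have "s \<in> S" "card (f s) \<le> card L"
    using \<open>s0 \<in> S\<close> \<open>f s0 = L\<close> unfolding argmin_on_def by auto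
  then show "f s = L" using card_seteq[OF fin lower] by blast
qed

lemma finite_E1: "finite (E1 n E s)"
  by (rule finite_subset[of _ "{1..n} \<times> {1..n}"]) (auto simp: E1_def split: prod.splits)

lemma finite_E2: "finite (E2 n E s)"
  by (rule finite_subset[of _ "{1..n} \<times> {1..n} \<times> {1..n}"]) (auto simp: E2_def split: prod.splits)

lemma finite_E3: "finite (E3 n E s)"
  by (rule finite_subset[of _ "{1..n} \<times> {1..n} \<times> {1..n}"]) (auto simp: E3_def split: prod.splits)

lemma argmin_on_subset: "argmin_on S f \<subseteq> S"
  unfolding argmin_on_def by blast

theorem proposition3p10:
  fixes n :: nat and E :: "(nat \<times> nat) set"
  assumes "n \<ge> 1"
    and "E \<subseteq> {1..n} \<times> {1..n}"
    and "\<forall>x. (x, x) \<notin> E"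
  shows "(scc_partition n E, scc_order n E) \<in> S3 n E
    \<and> (\<forall>s\<in>S3 n E. E3 n E s = perfect_nonconductors n E)"
proof -
  let ?s0 = "(scc_partition n E, scc_order n E)"
  let ?S1 = "argmin_on (POP n) (E1 n E)"
  let ?S2 = "argmin_on ?S1 (E2 n E)"
  have E1_s0: "E1 n E ?s0 = p_adj_pairs n E"
    using E1_scc_subset_p_adj_pairs[OF assms(2)] p_adj_pairs_subset_E1 by blast
  have S1: "?s0 \<in> ?S1" "\<And>s. s \<in> ?S1 \<Longrightarrow> E1 n E s = p_adj_pairs n E"
    by (rule argmin_on_attained_lower_bound[of "POP n" "E1 n E", OF finite_E1 p_adj_pairs_subset_E1 scc_in_POP
          equalityD1[OF E1_s0]])+
  have in_S1: "\<And>P \<pi>. (P, \<pi>) \<in> ?S1 \<Longrightarrow> (P, \<pi>) \<in> POP n \<and> E1 n E (P, \<pi>) = p_adj_pairs n E"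
    using S1(2) argmin_on_subset[of "POP n" "E1 n E"] by blast
  have lower2: "unshielded_conductors n E \<subseteq> E2 n E s" if "s \<in> ?S1" for s
    using that in_S1 unshielded_conductors_subset_E2 by (cases s) blast
  have S2: "?s0 \<in> ?S2"
    by (rule argmin_on_attained_lower_bound[of ?S1 "E2 n E", OF finite_E2 lower2 S1(1)
          E2_scc_subset_unshielded_conductors[OF E1_s0]])
  have lower3: "perfect_nonconductors n E \<subseteq> E3 n E s" if "s \<in> ?S2" for s
    using that argmin_on_subset[of ?S1 "E2 n E"] in_S1 perfect_nonconductors_subset_E3
    by (cases s) blast
  show ?thesis
    using argmin_on_attained_lower_bound[of ?S2 "E3 n E", OF finite_E3 lower3 S2
        E3_scc_subset_perfect_nonconductors[OF assms(2) E1_s0]]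
    unfolding S3_def by blast
qed

end
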